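(* Let $\Sigma$ be an alphabet with at least three letters. If $f$ and $g$ are unary congruence preserving functions $\mathcal{T}(\Sigma)\to\mathcal{T}(\Sigma)$ such that $f(a)=g(a)$ for all $a\in\Sigma$, then $f(t)=g(t)$ for all $t\in\mathcal{T}(\Sigma)$.
   Context: Let $\Sigma$ be an alphabet not containing $0,1$. A binary tree over $\Sigma$ is a finite set $t \subseteq \{0,1\}^*\Sigma$ such that for any $ua, vb \in t$ with $ua \neq vb$, $u$ is not a prefix of $v$ and $v$ is not a prefix of $u$; $\mathcal{T}(\Sigma)$ is the set of such trees, $\mathbf 0=\emptyset$, each letter $a$ is identified with $\{a\}$, and $t\star t' = 0.t\cup 1.t'$. A congruence is an equivalence relation on $\mathcal{T}(\Sigma)$ compatible with $\star$. A function $f\colon\mathcal{T}(\Sigma)\to\mathcal{T}(\Sigma)$ is congruence preserving if for every congruence $\sim$, $t\sim t'$ implies $f(t)\sim f(t')$. *)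

theory Defs
  imports Main
begin

text \<open>A word u a with u in {0,1}* and a in Sigma is represented as a pair (u, a),
  where u :: bool list (False = 0, True = 1).\<close>

type_synonym 'a btree = "(bool list \<times> 'a) set"

definition is_prefix :: "bool list \<Rightarrow> bool list \<Rightarrow> bool" where
  "is_prefix u v \<longleftrightarrow> (\<exists>w. v = u @ w)"

definition is_tree :: "'a btree \<Rightarrow> bool" where
  "is_tree t \<longleftrightarrow> finite t \<and>
     (\<forall>u a v b. (u, a) \<in> t \<longrightarrow> (v, b) \<in> t \<longrightarrow> (u, a) \<noteq> (v, b) \<longrightarrow>
        \<not> is_prefix u v \<and> \<not> is_prefix v u)"

definition trees :: "'a btree set" where
  "trees = {t. is_tree t}"

definition leaf :: "'a \<Rightarrow> 'a btree" where
  "leaf a = {([], a)}"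

definition star :: "'a btree \<Rightarrow> 'a btree \<Rightarrow> 'a btree" where
  "star t t' = (\<lambda>(u, a). (False # u, a)) ` t \<union> (\<lambda>(u, a). (True # u, a)) ` t'"

definition tree_congruence :: "('a btree \<times> 'a btree) set \<Rightarrow> bool" where
  "tree_congruence R \<longleftrightarrow> equiv trees R \<and>
     (\<forall>t1 t1' t2 t2'. (t1, t1') \<in> R \<longrightarrow> (t2, t2') \<in> R \<longrightarrow> (star t1 t2, star t1' t2') \<in> R)"

definition congruence_preserving :: "('a btree \<Rightarrow> 'a btree) \<Rightarrow> bool" where
  "congruence_preserving f \<longleftrightarrow> (\<forall>t \<in> trees. f t \<in> trees) \<and>
     (\<forall>R. tree_congruence R \<longrightarrow> (\<forall>t t'. (t, t') \<in> R \<longrightarrow> (f t, f t') \<in> R))"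

end

theory Submission
  imports Defs
begin

text \<open>Let \<open>H\<close> be a map on trees with \<open>H (star l r) = op (H l) (H r)\<close>. Its kernel is a
  congruence, so \<open>H t = H (leaf c)\<close> implies \<open>H (f t) = H (f (leaf c)) = H (g (leaf c)) = H (g t)\<close>.
  Hence it suffices to find, for two distinct letters \<open>a\<close> and \<open>b\<close>, such maps \<open>H\<^sub>a\<close> and
  \<open>H\<^sub>b\<close> with \<open>H\<^sub>c t = H\<^sub>c (leaf c)\<close> that jointly separate trees. For the empty tree,
  \<open>H\<^sub>c\<close> deletes all leaves labelled \<open>c\<close>. For a proper product \<open>t\<close>, \<open>H\<^sub>c\<close> rewrites
  bottom-up every subtree that has become equal to \<open>t\<close> into the leaf \<open>c\<close>; two such
  rewritings with different letters can be undone simultaneously, by induction on the tree.\<close>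

definition child :: "'a btree \<Rightarrow> bool \<Rightarrow> 'a btree" where
  "child s b = {(u, x). (b # u, x) \<in> s}"

definition tree_size :: "'a btree \<Rightarrow> nat" where
  "tree_size s = (\<Sum>w\<in>s. Suc (length (fst w)))"

lemma child_star [simp]:
  "child (star l r) False = l"
  "child (star l r) True = r"
  by (auto simp: child_def star_def)

lemma mem_child [simp]: "(u, x) \<in> child s b \<longleftrightarrow> (b # u, x) \<in> s"
  by (simp add: child_def)

lemma mem_star:
  "(v, x) \<in> star l r \<longleftrightarrow> (\<exists>u. v = False # u \<and> (u, x) \<in> l) \<or> (\<exists>u. v = True # u \<and> (u, x) \<in> r)"
  by (auto simp: star_def)

lemma is_prefix_Cons_Cons [simp]: "is_prefix (b # u) (c # v) \<longleftrightarrow> b = c \<and> is_prefix u v"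
  by (auto simp: is_prefix_def)

lemma star_child:
  assumes "\<forall>x. ([], x) \<notin> s"
  shows "star (child s False) (child s True) = s"
proof (rule set_eqI)
  fix w :: "bool list \<times> 'a"
  obtain u x where w: "w = (u, x)" by fastforce
  show "w \<in> star (child s False) (child s True) \<longleftrightarrow> w \<in> s"
  proof (cases u)
    case (Cons b v)
    then show ?thesis using w by (cases b) (auto simp: star_def child_def)
  qed (use assms w in \<open>auto simp: star_def\<close>)
qed

lemma star_inject [simp]: "star l r = star l' r' \<longleftrightarrow> l = l' \<and> r = r'"
  by (metis child_star)

lemma star_eq_empty_iff [simp]: "star l r = {} \<longleftrightarrow> l = {} \<and> r = {}"
  by (auto simp: star_def)

lemma star_empty [simp]: "star {} {} = {}"
  by (simp add: star_def)

lemma star_neq_leaf [simp]: "star l r \<noteq> leaf x" "leaf x \<noteq> star l r"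
  by (auto simp: star_def leaf_def)

lemma leaf_inject [simp]: "leaf x = leaf y \<longleftrightarrow> x = y"
  by (auto simp: leaf_def)

lemma leaf_neq_empty [simp]: "leaf x \<noteq> {}"
  by (simp add: leaf_def)

lemma finite_star [simp]: "finite (star l r) \<longleftrightarrow> finite l \<and> finite r"
  by (auto simp: star_def dest: finite_imageD[OF _ inj_onI])

lemma finite_child: "finite s \<Longrightarrow> finite (child s b)"
  using finite_vimageI[of s "\<lambda>(u, x). (b # u, x)"]
  by (auto simp: child_def vimage_def inj_on_def case_prod_unfold)

lemma is_treeI:
  assumes "finite s"
    and "\<And>u x v y. (u, x) \<in> s \<Longrightarrow> (v, y) \<in> s \<Longrightarrow> (u, x) \<noteq> (v, y) \<Longrightarrow> \<not> is_prefix u v"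
  shows "is_tree s"
  using assms unfolding is_tree_def by blast

lemma is_treeD:
  "is_tree s \<Longrightarrow> (u, x) \<in> s \<Longrightarrow> (v, y) \<in> s \<Longrightarrow> (u, x) \<noteq> (v, y) \<Longrightarrow> \<not> is_prefix u v"
  unfolding is_tree_def by blast

lemma is_tree_finite: "is_tree s \<Longrightarrow> finite s"
  by (simp add: is_tree_def)

lemma is_tree_leaf: "is_tree (leaf x)"
  by (simp add: is_tree_def leaf_def)

lemma is_tree_star:
  assumes "is_tree l" "is_tree r"
  shows "is_tree (star l r)"
proof (rule is_treeI)
  show "finite (star l r)" using assms by (simp add: is_tree_finite)
  fix u x v y
  assume "(u, x) \<in> star l r" "(v, y) \<in> star l r" "(u, x) \<noteq> (v, y)"
  then show "\<not> is_prefix u v"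
    using is_treeD[OF assms(1)] is_treeD[OF assms(2)] by (auto simp: mem_star) blast+
qed

lemma is_tree_child:
  assumes "is_tree s"
  shows "is_tree (child s b)"
proof (rule is_treeI)
  show "finite (child s b)" using assms by (simp add: is_tree_finite finite_child)
  fix u x v y
  assume "(u, x) \<in> child s b" "(v, y) \<in> child s b" "(u, x) \<noteq> (v, y)"
  then have "(b # u, x) \<in> s" "(b # v, y) \<in> s" "(b # u, x) \<noteq> (b # v, y)" by auto
  then have "\<not> is_prefix (b # u) (b # v)" by (rule is_treeD[OF assms])
  then show "\<not> is_prefix u v" by simp
qed

lemma is_tree_root_leaf:
  assumes "is_tree s" "([], x) \<in> s"
  shows "s = leaf x"
  using assms unfolding is_tree_def is_prefix_def leaf_def by force

lemma tree_size_child_less: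
  assumes "finite s" "s \<noteq> {}"
  shows "tree_size (child s b) < tree_size s"
proof -
  let ?cons = "\<lambda>(u, x). (b # u, x)"
  have "tree_size (child s b) = (\<Sum>w\<in>?cons ` child s b. length (fst w))"
    unfolding tree_size_def by (subst sum.reindex) (auto simp: inj_on_def intro!: sum.cong)
  also have "\<dots> \<le> (\<Sum>w\<in>s. length (fst w))"
    using assms by (intro sum_mono2) (auto simp: child_def)
  also have "\<dots> < tree_size s"
    unfolding tree_size_def using assms by (intro sum_strict_mono) auto
  finally show ?thesis .
qed

lemma tree_cases [consumes 1, case_names empty leaf star]:
  assumes "is_tree s"
    and "s = {} \<Longrightarrow> P"
    and "\<And>x. s = leaf x \<Longrightarrow> P"
    and "\<And>l r. s = star l r \<Longrightarrow> is_tree l \<Longrightarrow> is_tree r \<Longrightarrow> star l r \<noteq> {} \<Longrightarrow> P"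
  shows P
proof (cases "\<exists>x. ([], x) \<in> s")
  case True
  then obtain x where "([], x) \<in> s" by blast
  then show P by (rule assms(3)[OF is_tree_root_leaf[OF assms(1)]])
next
  case False
  then have s: "star (child s False) (child s True) = s"
    by (simp add: star_child)
  show P
  proof (cases "s = {}")
    case True
    then show P by (rule assms(2))
  next
    case False
    show P
      by (rule assms(4)[OF s[symmetric] is_tree_child[OF assms(1)] is_tree_child[OF assms(1)]])
        (simp add: s False)
  qed
qed

lemma tree_size_star_less:
  assumes "finite l" "finite r" "star l r \<noteq> {}"
  shows "tree_size l < tree_size (star l r)" "tree_size r < tree_size (star l r)"
  using assms tree_size_child_less[of "star l r" False] tree_size_child_less[of "star l r" True]
  by simp_all

lemma tree_induct [consumes 1, case_names empty leaf star]:
  assumes "is_tree s"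
    and "P {}"
    and "\<And>x. P (leaf x)"
    and "\<And>l r. is_tree l \<Longrightarrow> is_tree r \<Longrightarrow> star l r \<noteq> {} \<Longrightarrow> P l \<Longrightarrow> P r \<Longrightarrow> P (star l r)"
  shows "P s"
  using assms(1)
proof (induction s rule: measure_induct_rule[of tree_size])
  case (less s)
  from \<open>is_tree s\<close> show ?case
  proof (cases rule: tree_cases)
    case (star l r)
    then have "tree_size l < tree_size s" "tree_size r < tree_size s"
      using star tree_size_star_less[OF is_tree_finite is_tree_finite] by simp_all
    then show ?thesis using star less.IH assms(4) by blast
  qed (use assms(2,3) in auto)
qed

lemma tree_congruence_kernel:
  assumes hom: "\<And>l r. is_tree l \<Longrightarrow> is_tree r \<Longrightarrow> H (star l r) = op (H l) (H r)"
  shows "tree_congruence {(s, s'). s \<in> trees \<and> s' \<in> trees \<and> H s = H s'}"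
  unfolding tree_congruence_def equiv_def refl_on_def sym_def trans_def
  using hom by (auto simp: trees_def is_tree_star)

lemma congruence_preserving_kernel:
  assumes "congruence_preserving f"
    and "\<And>l r. is_tree l \<Longrightarrow> is_tree r \<Longrightarrow> H (star l r) = op (H l) (H r)"
    and "s \<in> trees" "s' \<in> trees" "H s = H s'"
  shows "H (f s) = H (f s')"
proof -
  let ?R = "{(s, s'). s \<in> trees \<and> s' \<in> trees \<and> H s = H s'}"
  have "tree_congruence ?R" using tree_congruence_kernel assms(2) .
  moreover have "(s, s') \<in> ?R" using assms(3-) by simp
  ultimately have "(f s, f s') \<in> ?R" using assms(1) unfolding congruence_preserving_def by blast
  then show ?thesis by simp
qed

lemma congruence_preserving_eq_modulo_kernel:
  assumes "congruence_preserving f" "congruence_preserving g" "\<forall>a. f (leaf a) = g (leaf a)"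
    and hom: "\<And>l r. is_tree l \<Longrightarrow> is_tree r \<Longrightarrow> H (star l r) = op (H l) (H r)"
    and "t \<in> trees" "H t = H (leaf c)"
  shows "H (f t) = H (g t)"
proof -
  have leaf: "leaf c \<in> trees" by (simp add: trees_def is_tree_leaf)
  have "H (f t) = H (f (leaf c))"
    using congruence_preserving_kernel[OF assms(1) hom assms(5) leaf assms(6)] .
  also have "\<dots> = H (g (leaf c))" using assms(3) by simp
  also have "\<dots> = H (g t)"
    using congruence_preserving_kernel[OF assms(2) hom leaf assms(5) assms(6)[symmetric]] .
  finally show ?thesis .
qed

definition delete_label :: "'a \<Rightarrow> 'a btree \<Rightarrow> 'a btree" where
  "delete_label c s = {w \<in> s. snd w \<noteq> c}"

lemma delete_label_star: "delete_label c (star l r) = star (delete_label c l) (delete_label c r)"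
  by (auto simp: delete_label_def star_def)

lemma delete_label_inj:
  assumes "a \<noteq> b" "delete_label a s = delete_label a s'" "delete_label b s = delete_label b s'"
  shows "s = s'"
  using assms unfolding delete_label_def by blast

definition collapse_root :: "'a btree \<Rightarrow> 'a \<Rightarrow> 'a btree \<Rightarrow> 'a btree" where
  "collapse_root t c p = (if p = t then leaf c else p)"

text \<open>Infinite sets, which are not trees, are sent to \<open>{}\<close>
  only to make the recursion terminate.\<close>

function collapse :: "'a btree \<Rightarrow> 'a \<Rightarrow> 'a btree \<Rightarrow> 'a btree" where
  "collapse t c s =
    (if s = {} \<or> infinite s then {}
     else if \<exists>x. s = leaf x then s
     else collapse_root t c (star (collapse t c (child s False)) (collapse t c (child s True))))"
  by pat_completeness auto
termination
  by (relation "measure (\<lambda>(t, c, s). tree_size s)") (auto simp: tree_size_child_less)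

declare collapse.simps [simp del]

lemma collapse_empty [simp]: "collapse t c {} = {}"
  by (simp add: collapse.simps)

lemma collapse_leaf [simp]: "collapse t c (leaf x) = leaf x"
  by (subst collapse.simps) (auto simp: leaf_def)

lemma collapse_star:
  assumes "t \<noteq> {}" "finite l" "finite r"
  shows "collapse t c (star l r) = collapse_root t c (star (collapse t c l) (collapse t c r))"
proof (cases "star l r = {}")
  case True
  then show ?thesis using assms(1) by (simp add: collapse_root_def)
next
  case False
  then show ?thesis using assms by (subst collapse.simps) (simp add: collapse_root_def)
qed

lemma collapse_eq_self:
  assumes "t \<noteq> {}" "is_tree s" "tree_size s < tree_size t"
  shows "collapse t c s = s"
  using assms(2,3)
proof (induction s rule: tree_induct)
  case (star l r)
  then have fin: "finite l" "finite r" by (simp_all add: is_tree_finite)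
  with star have "tree_size l < tree_size t" "tree_size r < tree_size t"
    using tree_size_star_less[OF fin] by simp_all
  with star fin show ?case
    using assms(1) by (auto simp: collapse_star collapse_root_def)
qed simp_all

lemma collapse_self:
  assumes "is_tree t" "\<forall>x. t \<noteq> leaf x" "t \<noteq> {}"
  shows "collapse t c t = leaf c"
  using assms(1)
proof (cases rule: tree_cases)
  case (star l r)
  then have fin: "finite l" "finite r" by (simp_all add: is_tree_finite)
  then have "tree_size l < tree_size t" "tree_size r < tree_size t"
    using star tree_size_star_less by simp_all
  then have "collapse t c l = l" "collapse t c r = r"
    using collapse_eq_self[OF assms(3)] star by simp_all
  with star fin show ?thesis
    using assms(3) by (simp add: collapse_star collapse_root_def)
qed (use assms(2,3) in simp_all)

lemma collapse_eq_empty_iff: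
  assumes "t \<noteq> {}" "is_tree s"
  shows "collapse t c s = {} \<longleftrightarrow> s = {}"
  using assms(2)
proof (induction s rule: tree_induct)
  case (star l r)
  then show ?case
    using assms(1) by (auto simp: collapse_star collapse_root_def is_tree_finite)
qed simp_all

lemma collapse_star_eq_leaf:
  assumes "t \<noteq> {}" "finite l" "finite r" "collapse t c (star l r) = leaf x"
  shows "x = c"
  using assms by (simp add: collapse_star collapse_root_def split: if_splits)

lemma collapse_star_inj:
  assumes "t \<noteq> {}" "finite l" "finite r" "finite l'" "finite r'"
    and "collapse t c (star l r) = collapse t c (star l' r')"
  shows "star (collapse t c l) (collapse t c r) = star (collapse t c l') (collapse t c r')"
  using assms(6) unfolding collapse_star[OF assms(1-3)] collapse_star[OF assms(1,4,5)] collapse_root_def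
  by (metis star_neq_leaf)

lemma collapse_inj:
  assumes "t \<noteq> {}" "a \<noteq> b" "is_tree u" "is_tree v"
    and "collapse t a u = collapse t a v" "collapse t b u = collapse t b v"
  shows "u = v"
  using assms(3-)
proof (induction u arbitrary: v rule: tree_induct)
  case empty
  then show ?case using assms(1) by (metis collapse_empty collapse_eq_empty_iff)
next
  case (leaf x)
  note eqs = leaf.prems(2,3)
  from \<open>is_tree v\<close> show ?case
  proof (cases rule: tree_cases)
    case (star l r)
    then have "finite l" "finite r" by (simp_all add: is_tree_finite)
    then have "x = a" "x = b"
      using eqs star collapse_star_eq_leaf[OF assms(1)] by (metis collapse_leaf)+
    with assms(2) show ?thesis by simp
  qed (use eqs in simp_all)
next
  case (star l r)
  note eqs = star.prems(2,3)
  have fin: "finite l" "finite r" using star.hyps(1,2) by (simp_all add: is_tree_finite)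
  from \<open>is_tree v\<close> show ?case
  proof (cases rule: tree_cases)
    case empty
    then have "collapse t a (star l r) = {}" using eqs by simp
    then show ?thesis
      using collapse_eq_empty_iff[OF assms(1) is_tree_star[OF star.hyps(1,2)]] star.hyps(3) by simp
  next
    case (leaf y)
    then have "y = a" "y = b"
      using eqs collapse_star_eq_leaf[OF assms(1) fin] by (metis collapse_leaf)+
    with assms(2) show ?thesis by simp
  next
    case (star l' r')
    then have fin': "finite l'" "finite r'" by (simp_all add: is_tree_finite)
    have "collapse t c l = collapse t c l' \<and> collapse t c r = collapse t c r'"
      if "collapse t c (star l r) = collapse t c (star l' r')" for c
      using collapse_star_inj[OF assms(1) fin fin' that] by simp
    then show ?thesis using eqs star star.IH by simp
  qed
qed

lemma congruence_preserving_eq_empty: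
  fixes f g :: "'a btree \<Rightarrow> 'a btree" and a b :: 'a
  assumes "congruence_preserving f" "congruence_preserving g" "\<forall>x. f (leaf x) = g (leaf x)"
    and "a \<noteq> b"
  shows "f {} = g {}"
proof -
  have empty: "{} \<in> trees" by (simp add: trees_def is_tree_def)
  have "delete_label c (f {}) = delete_label c (g {})" for c
    by (rule congruence_preserving_eq_modulo_kernel[where H = "delete_label c" and op = star,
          OF assms(1-3) delete_label_star empty])
      (simp add: delete_label_def leaf_def)
  from this[of a] this[of b] show ?thesis by (rule delete_label_inj[OF assms(4)])
qed

lemma congruence_preserving_eq_nonleaf:
  fixes f g :: "'a btree \<Rightarrow> 'a btree" and a b :: 'a
  assumes "congruence_preserving f" "congruence_preserving g" "\<forall>x. f (leaf x) = g (leaf x)"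
    and "a \<noteq> b" "is_tree t" "t \<noteq> {}" "\<forall>x. t \<noteq> leaf x"
  shows "f t = g t"
proof -
  have "t \<in> trees" using assms(5) by (simp add: trees_def)
  have eq: "collapse t c (f t) = collapse t c (g t)" for c
  proof (rule congruence_preserving_eq_modulo_kernel[OF assms(1-3) _ \<open>t \<in> trees\<close>])
    show "collapse t c (star l r) = collapse_root t c (star (collapse t c l) (collapse t c r))"
      if "is_tree l" "is_tree r" for l r
      using collapse_star[OF assms(6)] that by (simp add: is_tree_finite)
    show "collapse t c t = collapse t c (leaf c)"
      using collapse_self[OF assms(5,7,6)] by simp
  qed
  have "is_tree (f t)" "is_tree (g t)"
    using assms(1,2) \<open>t \<in> trees\<close> by (auto simp: congruence_preserving_def trees_def)
  from this eq[of a] eq[of b] show ?thesis by (rule collapse_inj[OF assms(6,4)])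
qed

theorem mainTheorem4:
  fixes f g :: "('a::finite) btree \<Rightarrow> 'a btree"
  assumes "card (UNIV :: 'a set) \<ge> 3"
    and "congruence_preserving f"
    and "congruence_preserving g"
    and "\<forall>a. f (leaf a) = g (leaf a)"
  shows "\<forall>t \<in> trees. f t = g t"
proof
  fix t :: "'a btree"
  assume "t \<in> trees"
  \<comment> \<open>Only two distinct letters are needed.\<close>
  have "\<not> card (UNIV :: 'a set) \<le> Suc 0" using assms(1) by simp
  then obtain a b :: 'a where "a \<noteq> b" by (auto simp: card_le_Suc0_iff_eq)
  from \<open>t \<in> trees\<close> have "is_tree t" by (simp add: trees_def)
  then show "f t = g t"
  proof (cases rule: tree_cases)
    case empty
    then show ?thesis using congruence_preserving_eq_empty[OF assms(2-4) \<open>a \<noteq> b\<close>] by simp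
  next
    case (leaf x)
    then show ?thesis using assms(4) by simp
  next
    case star
    then show ?thesis
      using congruence_preserving_eq_nonleaf[OF assms(2-4) \<open>a \<noteq> b\<close> \<open>is_tree t\<close>] by simp
  qed
qed

end
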